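(* Let $D,Q,P$ be simplicial abelian groups and $s\colon D\to P$, $f\colon Q\to P$ simplicial homomorphisms. Suppose $D$ is free and $m$-connected ($m\in\mathbb N$) and $f$ is surjective. Then there exists a simplicial homomorphism $t\colon D\to Q$ such that $f\circ t|_{D_{(m)}}=s|_{D_{(m)}}$.
   Context: A simplicial abelian group $D$ is free if each $D_q$ is a free abelian group. $D_{(m)}\subset D$ denotes the $m$-skeleton (the simplicial subset generated by simplices of dimension $\le m$). *)

theory Defs
  imports "HOL-Algebra.Free_Abelian_Groups"
begin

definition simplicial_abgroup ::
  "(nat \<Rightarrow> ('a, 'm) monoid_scheme) \<Rightarrow> (nat \<Rightarrow> nat \<Rightarrow> 'a \<Rightarrow> 'a) \<Rightarrow> (nat \<Rightarrow> nat \<Rightarrow> 'a \<Rightarrow> 'a) \<Rightarrow> bool"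
where
  "simplicial_abgroup G d s \<longleftrightarrow>
     (\<forall>q. comm_group (G q)) \<and>
     (\<forall>q i. i \<le> Suc q \<longrightarrow> d q i \<in> hom (G (Suc q)) (G q)) \<and>
     (\<forall>q i. i \<le> q \<longrightarrow> s q i \<in> hom (G q) (G (Suc q))) \<and>
     (\<forall>q i j x. i < j \<and> j \<le> Suc (Suc q) \<and> x \<in> carrier (G (Suc (Suc q))) \<longrightarrow>
        d q i (d (Suc q) j x) = d q (j - 1) (d (Suc q) i x)) \<and>
     (\<forall>q i j x. i \<le> j \<and> j \<le> q \<and> x \<in> carrier (G q) \<longrightarrow>
        s (Suc q) i (s q j x) = s (Suc q) (Suc j) (s q i x)) \<and>
     (\<forall>q i j x. i < j \<and> j \<le> Suc q \<and> x \<in> carrier (G (Suc q)) \<longrightarrow>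
        d (Suc q) i (s (Suc q) j x) = s q (j - 1) (d q i x)) \<and>
     (\<forall>q j x. j \<le> q \<and> x \<in> carrier (G q) \<longrightarrow>
        d q j (s q j x) = x \<and> d q (Suc j) (s q j x) = x) \<and>
     (\<forall>q i j x. Suc j < i \<and> i \<le> Suc (Suc q) \<and> x \<in> carrier (G (Suc q)) \<longrightarrow>
        d (Suc q) i (s (Suc q) j x) = s q j (d q (i - 1) x))"

definition simplicial_hom ::
  "(nat \<Rightarrow> ('a, 'm) monoid_scheme) \<Rightarrow> (nat \<Rightarrow> nat \<Rightarrow> 'a \<Rightarrow> 'a) \<Rightarrow> (nat \<Rightarrow> nat \<Rightarrow> 'a \<Rightarrow> 'a) \<Rightarrow>
   (nat \<Rightarrow> ('b, 'n) monoid_scheme) \<Rightarrow> (nat \<Rightarrow> nat \<Rightarrow> 'b \<Rightarrow> 'b) \<Rightarrow> (nat \<Rightarrow> nat \<Rightarrow> 'b \<Rightarrow> 'b) \<Rightarrow>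
   (nat \<Rightarrow> 'a \<Rightarrow> 'b) \<Rightarrow> bool"
where
  "simplicial_hom G dG sG H dH sH t \<longleftrightarrow>
     (\<forall>q. t q \<in> hom (G q) (H q)) \<and>
     (\<forall>q i x. i \<le> Suc q \<and> x \<in> carrier (G (Suc q)) \<longrightarrow> t q (dG q i x) = dH q i (t (Suc q) x)) \<and>
     (\<forall>q i x. i \<le> q \<and> x \<in> carrier (G q) \<longrightarrow> t (Suc q) (sG q i x) = sH q i (t q x))"

definition free_simplicial :: "(nat \<Rightarrow> ('a, 'm) monoid_scheme) \<Rightarrow> bool" where
  "free_simplicial G \<longleftrightarrow> (\<forall>q. \<exists>B :: 'a set. G q \<cong> free_Abelian_group B)"

text \<open>Normalized (Moore) complex: N_0 = G_0, N_{q+1} = elements of G_{q+1} killed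
 by the faces d_1,...,d_{q+1}; differential d_0.\<close>

definition moore :: "(nat \<Rightarrow> ('a, 'm) monoid_scheme) \<Rightarrow> (nat \<Rightarrow> nat \<Rightarrow> 'a \<Rightarrow> 'a) \<Rightarrow> nat \<Rightarrow> 'a set" where
  "moore G d n = (case n of 0 \<Rightarrow> carrier (G 0)
     | Suc q \<Rightarrow> {x \<in> carrier (G (Suc q)). \<forall>i\<in>{1..Suc q}. d q i x = \<one>\<^bsub>G q\<^esub>})"

text \<open>m-connected: pi_n(G) = H_n(Moore complex) vanishes for all n <= m.\<close>

definition m_connected :: "nat \<Rightarrow> (nat \<Rightarrow> ('a, 'm) monoid_scheme) \<Rightarrow> (nat \<Rightarrow> nat \<Rightarrow> 'a \<Rightarrow> 'a) \<Rightarrow> bool" where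
  "m_connected m G d \<longleftrightarrow>
     (\<forall>n \<le> m. \<forall>y \<in> moore G d n.
        (case n of 0 \<Rightarrow> True | Suc q \<Rightarrow> d q 0 y = \<one>\<^bsub>G q\<^esub>) \<longrightarrow>
        (\<exists>x \<in> moore G d (Suc n). d n 0 x = y))"

inductive_set skeleton ::
  "(nat \<Rightarrow> ('a, 'm) monoid_scheme) \<Rightarrow> (nat \<Rightarrow> nat \<Rightarrow> 'a \<Rightarrow> 'a) \<Rightarrow> (nat \<Rightarrow> nat \<Rightarrow> 'a \<Rightarrow> 'a) \<Rightarrow> nat \<Rightarrow> (nat \<times> 'a) set"
  for G d s m
where
  gen: "k \<le> m \<Longrightarrow> x \<in> carrier (G k) \<Longrightarrow> (k, x) \<in> skeleton G d s m"
| face: "(Suc q, x) \<in> skeleton G d s m \<Longrightarrow> i \<le> Suc q \<Longrightarrow> (q, d q i x) \<in> skeleton G d s m"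
| degen: "(q, x) \<in> skeleton G d s m \<Longrightarrow> i \<le> q \<Longrightarrow> (Suc q, s q i x) \<in> skeleton G d s m"

end

theory Submission
  imports Defs
begin

text \<open>The argument runs through the Moore complex \<open>N\<close>. Since \<open>D\<close> is free and its homotopy
  vanishes up to degree \<open>m\<close>, the cycles of \<open>N D\<close> split off in degrees \<open>\<le> m\<close>: there are
  retractions \<open>rho k\<close> of \<open>D k\<close> onto the cycles and maps \<open>lam (k + 1) : D k \<rightarrow> N (k + 1)\<close> with
  \<open>d\<^sub>0 \<circ> lam (k + 1) = rho k\<close>, so that \<open>x = rho n x + lam n (d\<^sub>0 x)\<close> for \<open>x \<in> N n\<close>, \<open>n > 0\<close>. Because \<open>f\<close> is
  surjective it is surjective on Moore complexes, and by freeness \<open>s \<circ> lam\<close> lifts along \<open>f\<close>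
  into \<open>N Q\<close>. These lifts assemble to a chain map \<open>psi : N D \<rightarrow> N Q\<close> with \<open>f \<circ> psi = s\<close> in
  degrees \<open>\<le> m\<close>. Finally, every chain map of Moore complexes extends to a simplicial map, since
  each simplex is a Moore simplex times degenerate ones; the extension still lifts \<open>s\<close> in degrees
  \<open>\<le> m\<close>, hence on the \<open>m\<close>-skeleton, which is generated from there by degeneracies.\<close>

section \<open>Group homomorphisms and free abelian groups\<close>

lemma hom_inv:
  "h \<in> hom G H \<Longrightarrow> group G \<Longrightarrow> group H \<Longrightarrow> x \<in> carrier G \<Longrightarrow> h (inv\<^bsub>G\<^esub> x) = inv\<^bsub>H\<^esub> (h x)"
  by (simp add: group_hom.hom_inv group_hom_axioms_def group_hom_def)

lemma hom_comp: "f \<in> hom G H \<Longrightarrow> g \<in> hom H K \<Longrightarrow> (\<lambda>x. g (f x)) \<in> hom G K"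
  using hom_compose[of f G H g K] by (simp add: comp_def)

lemma (in comm_group) hom_group_inv: "f \<in> hom H G \<Longrightarrow> (\<lambda>x. inv f x) \<in> hom H G"
  unfolding hom_def by (auto simp: inv_mult Pi_iff)

lemma (in comm_group) subgroup_comm_group: "subgroup A G \<Longrightarrow> comm_group (G\<lparr>carrier := A\<rparr>)"
  by (rule group.group_comm_groupI[OF subgroup.subgroup_is_group[OF _ is_group]])
     (auto simp: subgroup.mem_carrier m_comm)

lemma free_Abelian_group_hom_eq:
  assumes g: "g \<in> hom (free_Abelian_group B) Y" and h: "h \<in> hom (free_Abelian_group B) Y"
    and Y: "group Y" and gen: "\<And>b. b \<in> B \<Longrightarrow> g (frag_of b) = h (frag_of b)"
    and z: "z \<in> carrier (free_Abelian_group B)"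
  shows "g z = h z"
proof -
  let ?F = "free_Abelian_group B"
  have "Poly_Mapping.keys z \<subseteq> B" using z by simp
  then show ?thesis
  proof (rule free_Abelian_group_induct)
    show "g 0 = h 0" using hom_one[OF g] hom_one[OF h] Y by simp
  next
    fix x y
    assume "Poly_Mapping.keys x \<subseteq> B" "Poly_Mapping.keys y \<subseteq> B" and IH: "g x = h x" "g y = h y"
    then have "x - y = x \<otimes>\<^bsub>?F\<^esub> inv\<^bsub>?F\<^esub> y" "y \<in> carrier ?F" "x \<in> carrier ?F" by auto
    moreover have "inv\<^bsub>?F\<^esub> y \<in> carrier ?F"
      using \<open>y \<in> carrier ?F\<close> by (simp del: inv_free_Abelian_group carrier_free_Abelian_group_iff)
    ultimately show "g (x - y) = h (x - y)"
      using IH hom_mult[OF g] hom_mult[OF h] hom_inv[OF g] hom_inv[OF h] Y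
      by (simp del: inv_free_Abelian_group mult_free_Abelian_group)
  qed (use gen in simp)
qed

lemma free_Abelian_group_lift:
  assumes X: "comm_group X" and Y: "group Y" and h: "h \<in> hom X Y"
    and u: "u \<in> hom (free_Abelian_group B) Y" and img: "u ` carrier (free_Abelian_group B) \<subseteq> h ` carrier X"
  obtains v where "v \<in> hom (free_Abelian_group B) X"
    "\<And>z. z \<in> carrier (free_Abelian_group B) \<Longrightarrow> h (v z) = u z"
proof -
  interpret X: comm_group X by (rule X)
  have "\<forall>b\<in>B. \<exists>a \<in> carrier X. h a = u (frag_of b)"
    using img by (metis frag_of_in_free_Abelian_group imageE image_subset_iff)
  then obtain c where c: "\<And>b. b \<in> B \<Longrightarrow> c b \<in> carrier X \<and> h (c b) = u (frag_of b)"
    by metis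
  obtain v where v: "v \<in> hom (free_Abelian_group B) X" "\<And>b. b \<in> B \<Longrightarrow> v (frag_of b) = c b"
    using X.free_Abelian_group_universal[of c B] c by blast
  have "h (v z) = u z" if "z \<in> carrier (free_Abelian_group B)" for z
    using free_Abelian_group_hom_eq[OF hom_comp[OF v(1) h] u Y _ that] v(2) c by simp
  with v(1) that show ?thesis by blast
qed

lemma free_Abelian_group_lift_into_subgroup:
  assumes iso: "G \<cong> free_Abelian_group B" and G: "group G" and X: "comm_group X" and Y: "group Y"
    and h: "h \<in> hom X Y" and A: "subgroup A X" and u: "u \<in> hom G Y" and img: "u ` carrier G \<subseteq> h ` A"
  obtains v where "v \<in> hom G X" "\<And>x. x \<in> carrier G \<Longrightarrow> v x \<in> A \<and> h (v x) = u x"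
proof -
  let ?F = "free_Abelian_group B"
  obtain \<phi> where phi: "\<phi> \<in> iso G ?F" using iso unfolding is_iso_def by blast
  define \<psi> where "\<psi> = inv_into (carrier G) \<phi>"
  have psi: "\<psi> \<in> iso ?F G" unfolding \<psi>_def by (rule group.iso_set_sym[OF G phi])
  have hA: "h \<in> hom (X\<lparr>carrier := A\<rparr>) Y"
    using h subgroup.subset[OF A] by (auto simp: hom_def)
  have "(\<lambda>z. u (\<psi> z)) ` carrier ?F \<subseteq> h ` carrier (X\<lparr>carrier := A\<rparr>)"
    using img hom_in_carrier[OF iso_imp_homomorphism[OF psi]] by auto
  then obtain w where w: "w \<in> hom ?F (X\<lparr>carrier := A\<rparr>)" "\<And>z. z \<in> carrier ?F \<Longrightarrow> h (w z) = u (\<psi> z)"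
    by (rule free_Abelian_group_lift[OF comm_group.subgroup_comm_group[OF X A] Y hA
        hom_comp[OF iso_imp_homomorphism[OF psi] u]]) blast
  show ?thesis
  proof
    show "(\<lambda>x. w (\<phi> x)) \<in> hom G X"
      using hom_comp[OF iso_imp_homomorphism[OF phi] w(1)] subgroup.subset[OF A] by (auto simp: hom_def)
    show "w (\<phi> x) \<in> A \<and> h (w (\<phi> x)) = u x" if "x \<in> carrier G" for x
      using w hom_in_carrier[OF iso_imp_homomorphism[OF phi] that] phi that
      by (auto simp: \<psi>_def iso_iff hom_def)
  qed
qed

section \<open>Simplicial abelian groups and their Moore complexes\<close>

locale simplicial_abelian =
  fixes G :: "nat \<Rightarrow> ('a, 'm) monoid_scheme" and d s :: "nat \<Rightarrow> nat \<Rightarrow> 'a \<Rightarrow> 'a"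
  assumes simplicial: "simplicial_abgroup G d s"
begin

lemma level_comm_group: "comm_group (G q)"
  using simplicial unfolding simplicial_abgroup_def by simp

lemma level_group: "group (G q)"
  using level_comm_group comm_group_def by blast

lemma level_monoid: "monoid (G q)"
  using level_group group.is_monoid by blast

lemma one_closed [simp]: "\<one>\<^bsub>G q\<^esub> \<in> carrier (G q)"
  by (rule monoid.one_closed[OF level_monoid])
lemma m_closed [simp]: "x \<in> carrier (G q) \<Longrightarrow> y \<in> carrier (G q) \<Longrightarrow> x \<otimes>\<^bsub>G q\<^esub> y \<in> carrier (G q)"
  by (rule monoid.m_closed[OF level_monoid])
lemma inv_closed [simp]: "x \<in> carrier (G q) \<Longrightarrow> inv\<^bsub>G q\<^esub> x \<in> carrier (G q)"
  by (rule group.inv_closed[OF level_group])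
lemma l_one [simp]: "x \<in> carrier (G q) \<Longrightarrow> \<one>\<^bsub>G q\<^esub> \<otimes>\<^bsub>G q\<^esub> x = x"
  by (rule monoid.l_one[OF level_monoid])
lemma r_one [simp]: "x \<in> carrier (G q) \<Longrightarrow> x \<otimes>\<^bsub>G q\<^esub> \<one>\<^bsub>G q\<^esub> = x"
  by (rule monoid.r_one[OF level_monoid])
lemma inv_one [simp]: "inv\<^bsub>G q\<^esub> \<one>\<^bsub>G q\<^esub> = \<one>\<^bsub>G q\<^esub>"
  by (rule monoid.inv_one[OF level_monoid])
lemma r_inv [simp]: "x \<in> carrier (G q) \<Longrightarrow> x \<otimes>\<^bsub>G q\<^esub> inv\<^bsub>G q\<^esub> x = \<one>\<^bsub>G q\<^esub>"
  by (rule group.r_inv[OF level_group])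
lemma m_assoc:
  "x \<in> carrier (G q) \<Longrightarrow> y \<in> carrier (G q) \<Longrightarrow> z \<in> carrier (G q) \<Longrightarrow>
   x \<otimes>\<^bsub>G q\<^esub> y \<otimes>\<^bsub>G q\<^esub> z = x \<otimes>\<^bsub>G q\<^esub> (y \<otimes>\<^bsub>G q\<^esub> z)"
  by (rule monoid.m_assoc[OF level_monoid])

lemma face_hom: "i \<le> Suc q \<Longrightarrow> d q i \<in> hom (G (Suc q)) (G q)"
  using simplicial unfolding simplicial_abgroup_def by simp
lemma degen_hom: "i \<le> q \<Longrightarrow> s q i \<in> hom (G q) (G (Suc q))"
  using simplicial unfolding simplicial_abgroup_def by simp

lemma face_closed: "i \<le> Suc q \<Longrightarrow> x \<in> carrier (G (Suc q)) \<Longrightarrow> d q i x \<in> carrier (G q)"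
  by (rule hom_in_carrier[OF face_hom])
lemma degen_closed: "i \<le> q \<Longrightarrow> x \<in> carrier (G q) \<Longrightarrow> s q i x \<in> carrier (G (Suc q))"
  by (rule hom_in_carrier[OF degen_hom])
lemma face_mult:
  "i \<le> Suc q \<Longrightarrow> x \<in> carrier (G (Suc q)) \<Longrightarrow> y \<in> carrier (G (Suc q)) \<Longrightarrow>
   d q i (x \<otimes>\<^bsub>G (Suc q)\<^esub> y) = d q i x \<otimes>\<^bsub>G q\<^esub> d q i y"
  by (rule hom_mult[OF face_hom])
lemma degen_mult:
  "i \<le> q \<Longrightarrow> x \<in> carrier (G q) \<Longrightarrow> y \<in> carrier (G q) \<Longrightarrow>
   s q i (x \<otimes>\<^bsub>G q\<^esub> y) = s q i x \<otimes>\<^bsub>G (Suc q)\<^esub> s q i y"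
  by (rule hom_mult[OF degen_hom])
lemma face_one: "i \<le> Suc q \<Longrightarrow> d q i \<one>\<^bsub>G (Suc q)\<^esub> = \<one>\<^bsub>G q\<^esub>"
  by (rule hom_one[OF face_hom level_group level_group])
lemma degen_one: "i \<le> q \<Longrightarrow> s q i \<one>\<^bsub>G q\<^esub> = \<one>\<^bsub>G (Suc q)\<^esub>"
  by (rule hom_one[OF degen_hom level_group level_group])
lemma face_inv:
  "i \<le> Suc q \<Longrightarrow> x \<in> carrier (G (Suc q)) \<Longrightarrow> d q i (inv\<^bsub>G (Suc q)\<^esub> x) = inv\<^bsub>G q\<^esub> d q i x"
  by (rule hom_inv[OF face_hom level_group level_group])
lemma degen_inv:
  "i \<le> q \<Longrightarrow> x \<in> carrier (G q) \<Longrightarrow> s q i (inv\<^bsub>G q\<^esub> x) = inv\<^bsub>G (Suc q)\<^esub> s q i x"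
  by (rule hom_inv[OF degen_hom level_group level_group])

lemma face_face:
  "i < j \<Longrightarrow> j \<le> Suc (Suc q) \<Longrightarrow> x \<in> carrier (G (Suc (Suc q))) \<Longrightarrow>
   d q i (d (Suc q) j x) = d q (j - 1) (d (Suc q) i x)"
  using simplicial unfolding simplicial_abgroup_def by simp
lemma degen_degen:
  "i \<le> j \<Longrightarrow> j \<le> q \<Longrightarrow> x \<in> carrier (G q) \<Longrightarrow> s (Suc q) i (s q j x) = s (Suc q) (Suc j) (s q i x)"
  using simplicial unfolding simplicial_abgroup_def by simp
lemma face_degen_less:
  "i < j \<Longrightarrow> j \<le> Suc q \<Longrightarrow> x \<in> carrier (G (Suc q)) \<Longrightarrow>
   d (Suc q) i (s (Suc q) j x) = s q (j - 1) (d q i x)"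
  using simplicial unfolding simplicial_abgroup_def by simp
lemma face_degen_same: "j \<le> q \<Longrightarrow> x \<in> carrier (G q) \<Longrightarrow> d q j (s q j x) = x"
  using simplicial unfolding simplicial_abgroup_def by simp
lemma face_Suc_degen_same: "j \<le> q \<Longrightarrow> x \<in> carrier (G q) \<Longrightarrow> d q (Suc j) (s q j x) = x"
  using simplicial unfolding simplicial_abgroup_def by simp
lemma face_degen_greater:
  "Suc j < i \<Longrightarrow> i \<le> Suc (Suc q) \<Longrightarrow> x \<in> carrier (G (Suc q)) \<Longrightarrow>
   d (Suc q) i (s (Suc q) j x) = s q j (d q (i - 1) x)"
  using simplicial unfolding simplicial_abgroup_def by simp

abbreviation N :: "nat \<Rightarrow> 'a set" where "N n \<equiv> moore G d n"

lemma moore_0: "N 0 = carrier (G 0)"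
  by (simp add: moore_def)

lemma moore_Suc_iff:
  "x \<in> N (Suc q) \<longleftrightarrow> x \<in> carrier (G (Suc q)) \<and> (\<forall>i\<in>{1..Suc q}. d q i x = \<one>\<^bsub>G q\<^esub>)"
  by (simp add: moore_def)

lemma moore_closed: "x \<in> N n \<Longrightarrow> x \<in> carrier (G n)"
  by (cases n) (auto simp: moore_def)

lemma moore_subgroup: "subgroup (N n) (G n)"
  by (cases n) (auto simp: subgroup_def moore_def face_mult face_inv face_one)

lemma moore_one: "\<one>\<^bsub>G n\<^esub> \<in> N n"
  using subgroup.one_closed[OF moore_subgroup] by simp

lemma moore_mult: "x \<in> N n \<Longrightarrow> y \<in> N n \<Longrightarrow> x \<otimes>\<^bsub>G n\<^esub> y \<in> N n"
  by (rule subgroup.m_closed[OF moore_subgroup])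

lemma moore_inv: "x \<in> N n \<Longrightarrow> inv\<^bsub>G n\<^esub> x \<in> N n"
  using subgroup.m_inv_closed[OF moore_subgroup] by simp

lemma face0_moore: "x \<in> N (Suc q) \<Longrightarrow> d q 0 x \<in> N q"
proof (cases q)
  case (Suc q')
  assume x: "x \<in> N (Suc q)"
  have "d q' i (d q 0 x) = \<one>\<^bsub>G q'\<^esub>" if "i \<in> {1..Suc q'}" for i
  proof -
    have "d q' i (d q 0 x) = d q' 0 (d q (Suc i) x)"
      using face_face[of 0 "Suc i" q' x] that x Suc by (auto simp: moore_closed)
    also have "d q (Suc i) x = \<one>\<^bsub>G q\<^esub>" using x that Suc by (auto simp: moore_Suc_iff)
    finally show ?thesis using Suc face_one by auto
  qed
  then show ?thesis using x Suc by (auto simp: moore_Suc_iff face_closed moore_closed)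
qed (simp add: moore_def face_closed)

lemma face0_face0_moore: "x \<in> N (Suc (Suc q)) \<Longrightarrow> d q 0 (d (Suc q) 0 x) = \<one>\<^bsub>G q\<^esub>"
  using face_face[of 0 1 q x] face_one[of 0 q] by (auto simp: moore_Suc_iff)

definition cycles :: "nat \<Rightarrow> 'a set" where
  "cycles k = {y \<in> N k. \<forall>q. k = Suc q \<longrightarrow> d q 0 y = \<one>\<^bsub>G q\<^esub>}"

lemma cycles_moore: "z \<in> cycles k \<Longrightarrow> z \<in> N k"
  by (simp add: cycles_def)

lemma face0_cycles: "x \<in> N (Suc k) \<Longrightarrow> d k 0 x \<in> cycles k"
  unfolding cycles_def using face0_moore face0_face0_moore by (cases k) auto

definition kill_face :: "nat \<Rightarrow> nat \<Rightarrow> 'a \<Rightarrow> 'a" where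
  "kill_face q j x = x \<otimes>\<^bsub>G (Suc q)\<^esub> inv\<^bsub>G (Suc q)\<^esub> (s q j (d q (Suc j) x))"

lemma kill_face_hom: "j \<le> q \<Longrightarrow> kill_face q j \<in> hom (G (Suc q)) (G (Suc q))"
proof -
  assume j: "j \<le> q"
  interpret comm_group "G (Suc q)" by (rule level_comm_group)
  have "(\<lambda>x. s q j (d q (Suc j) x)) \<in> hom (G (Suc q)) (G (Suc q))"
    by (rule hom_comp[OF face_hom degen_hom]) (use j in auto)
  then have "(\<lambda>x. x \<otimes>\<^bsub>G (Suc q)\<^esub> inv\<^bsub>G (Suc q)\<^esub> (s q j (d q (Suc j) x))) \<in> hom (G (Suc q)) (G (Suc q))"
    by (intro hom_group_mult hom_group_inv) (auto simp: hom_def)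
  then show ?thesis unfolding kill_face_def[abs_def] .
qed

lemma kill_face_closed: "j \<le> q \<Longrightarrow> x \<in> carrier (G (Suc q)) \<Longrightarrow> kill_face q j x \<in> carrier (G (Suc q))"
  by (rule hom_in_carrier[OF kill_face_hom])

lemma kill_face_mult_degen:
  "j \<le> q \<Longrightarrow> x \<in> carrier (G (Suc q)) \<Longrightarrow> kill_face q j x \<otimes>\<^bsub>G (Suc q)\<^esub> s q j (d q (Suc j) x) = x"
  unfolding kill_face_def using degen_closed face_closed
  by (simp add: m_assoc group.l_inv[OF level_group])

lemma kill_face_moore: "j \<le> q \<Longrightarrow> x \<in> N (Suc q) \<Longrightarrow> kill_face q j x = x"
  unfolding kill_face_def by (auto simp: moore_Suc_iff degen_one)

lemma kill_face_faces:
  assumes j: "j \<le> q" and x: "x \<in> carrier (G (Suc q))"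
    and above: "\<And>l. Suc j < l \<Longrightarrow> l \<le> Suc q \<Longrightarrow> d q l x = \<one>\<^bsub>G q\<^esub>"
    and l: "j < l" "l \<le> Suc q"
  shows "d q l (kill_face q j x) = \<one>\<^bsub>G q\<^esub>"
proof (cases "l = Suc j")
  case True
  then show ?thesis unfolding kill_face_def using j x
    by (simp add: face_mult face_inv degen_closed face_closed face_Suc_degen_same)
next
  case False
  then have l': "Suc j < l" using l by auto
  then obtain q' where q: "q = Suc q'" using l by (cases q) auto
  have "d q l (s q j (d q (Suc j) x)) = s q' j (d q' (l - 1) (d q (Suc j) x))"
    using face_degen_greater[of j l q'] q l' l j x face_closed by auto
  also have "d q' (l - 1) (d q (Suc j) x) = d q' (Suc j) (d q l x)"
    using face_face[of "Suc j" l q' x] q l' l x by auto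
  also have "\<dots> = \<one>\<^bsub>G q'\<^esub>" using above l' l face_one q by auto
  finally have "d q l (s q j (d q (Suc j) x)) = \<one>\<^bsub>G q\<^esub>" using degen_one q j l' l by auto
  then show ?thesis unfolding kill_face_def using j x l above l'
    by (simp add: face_mult face_inv degen_closed face_closed)
qed

lemma kill_face_degen_below:
  assumes "k < j" "j \<le> Suc q" "y \<in> carrier (G (Suc q))"
  shows "kill_face (Suc q) j (s (Suc q) k y) = s (Suc q) k (kill_face q (j - 1) y)"
proof -
  define z where "z = d q j y"
  have z: "z \<in> carrier (G q)" unfolding z_def using face_closed assms by auto
  have "d (Suc q) (Suc j) (s (Suc q) k y) = s q k z"
    unfolding z_def using face_degen_greater[of k "Suc j" q y] assms by auto
  moreover have "s (Suc q) j (s q k z) = s (Suc q) k (s q (j - 1) z)"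
    using degen_degen[of k "j - 1" q z] assms z by auto
  moreover have "kill_face q (j - 1) y = y \<otimes>\<^bsub>G (Suc q)\<^esub> inv\<^bsub>G (Suc q)\<^esub> (s q (j - 1) z)"
    unfolding kill_face_def z_def using assms by simp
  ultimately show ?thesis
    unfolding kill_face_def[of "Suc q" j] using assms z degen_closed
    by (simp add: degen_mult degen_inv)
qed

fun kill_faces :: "nat \<Rightarrow> nat \<Rightarrow> 'a \<Rightarrow> 'a" where
  "kill_faces q 0 x = x"
| "kill_faces q (Suc j) x = kill_faces q j (kill_face q j x)"

declare kill_faces.simps(2) [simp del]

lemma kill_faces_hom: "j \<le> Suc q \<Longrightarrow> kill_faces q j \<in> hom (G (Suc q)) (G (Suc q))"
proof (induction j)
  case 0
  then show ?case by (simp add: hom_def)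
next
  case (Suc j)
  then have "(\<lambda>x. kill_faces q j (kill_face q j x)) \<in> hom (G (Suc q)) (G (Suc q))"
    using hom_comp[OF kill_face_hom] by simp
  then show ?case by (simp add: kill_faces.simps fun_eq_iff)
qed

lemma kill_faces_moore:
  "j \<le> Suc q \<Longrightarrow> x \<in> carrier (G (Suc q)) \<Longrightarrow> (\<And>l. j < l \<Longrightarrow> l \<le> Suc q \<Longrightarrow> d q l x = \<one>\<^bsub>G q\<^esub>) \<Longrightarrow>
   kill_faces q j x \<in> N (Suc q)"
proof (induction j arbitrary: x)
  case 0
  then show ?case by (auto simp: moore_Suc_iff)
next
  case (Suc j)
  then show ?case by (simp add: kill_faces.simps kill_face_closed kill_face_faces)
qed

lemma kill_faces_id: "x \<in> N (Suc q) \<Longrightarrow> j \<le> Suc q \<Longrightarrow> kill_faces q j x = x"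
  by (induction j) (auto simp: kill_faces.simps kill_face_moore)

definition moore_proj :: "nat \<Rightarrow> 'a \<Rightarrow> 'a" where
  "moore_proj n x = (case n of 0 \<Rightarrow> x | Suc q \<Rightarrow> kill_faces q (Suc q) x)"

lemma moore_proj_hom: "moore_proj n \<in> hom (G n) (G n)"
proof (cases n)
  case 0
  have "moore_proj 0 = (\<lambda>x. x)" by (simp add: moore_proj_def[abs_def])
  then show ?thesis using 0 by (simp add: hom_def)
next
  case (Suc q)
  have "moore_proj (Suc q) = kill_faces q (Suc q)" by (simp add: moore_proj_def[abs_def])
  then show ?thesis using Suc kill_faces_hom by simp
qed

lemma moore_proj_in_moore: "x \<in> carrier (G n) \<Longrightarrow> moore_proj n x \<in> N n"
  by (cases n) (auto simp: moore_proj_def moore_0 intro!: kill_faces_moore)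

lemma moore_proj_id: "x \<in> N n \<Longrightarrow> moore_proj n x = x"
  by (cases n) (auto simp: moore_proj_def kill_faces_id)

end

locale simplicial_map = G: simplicial_abelian G dG sG + H: simplicial_abelian H dH sH
  for G :: "nat \<Rightarrow> ('a, 'm1) monoid_scheme" and dG sG
    and H :: "nat \<Rightarrow> ('b, 'm2) monoid_scheme" and dH sH +
  fixes h :: "nat \<Rightarrow> 'a \<Rightarrow> 'b"
  assumes simplicial_hom: "simplicial_hom G dG sG H dH sH h"
begin

lemma map_hom: "h q \<in> hom (G q) (H q)"
  using simplicial_hom unfolding simplicial_hom_def by simp
lemma map_face: "i \<le> Suc q \<Longrightarrow> x \<in> carrier (G (Suc q)) \<Longrightarrow> h q (dG q i x) = dH q i (h (Suc q) x)"
  using simplicial_hom unfolding simplicial_hom_def by simp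
lemma map_degen: "i \<le> q \<Longrightarrow> x \<in> carrier (G q) \<Longrightarrow> h (Suc q) (sG q i x) = sH q i (h q x)"
  using simplicial_hom unfolding simplicial_hom_def by simp

lemma map_closed: "x \<in> carrier (G q) \<Longrightarrow> h q x \<in> carrier (H q)"
  by (rule hom_in_carrier[OF map_hom])
lemma map_mult: "x \<in> carrier (G q) \<Longrightarrow> y \<in> carrier (G q) \<Longrightarrow> h q (x \<otimes>\<^bsub>G q\<^esub> y) = h q x \<otimes>\<^bsub>H q\<^esub> h q y"
  by (rule hom_mult[OF map_hom])
lemma map_one: "h q \<one>\<^bsub>G q\<^esub> = \<one>\<^bsub>H q\<^esub>"
  by (rule hom_one[OF map_hom G.level_group H.level_group])

lemma map_kill_face:
  "j \<le> q \<Longrightarrow> x \<in> carrier (G (Suc q)) \<Longrightarrow> h (Suc q) (G.kill_face q j x) = H.kill_face q j (h (Suc q) x)"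
  unfolding G.kill_face_def H.kill_face_def
  by (simp add: map_mult hom_inv[OF map_hom G.level_group H.level_group] G.degen_closed G.face_closed
      map_degen map_face)

lemma map_kill_faces:
  "j \<le> Suc q \<Longrightarrow> x \<in> carrier (G (Suc q)) \<Longrightarrow> h (Suc q) (G.kill_faces q j x) = H.kill_faces q j (h (Suc q) x)"
  by (induction j arbitrary: x) (auto simp: map_kill_face G.kill_face_closed G.kill_faces.simps H.kill_faces.simps)

lemma map_moore_proj: "x \<in> carrier (G n) \<Longrightarrow> h n (G.moore_proj n x) = H.moore_proj n (h n x)"
  by (cases n) (auto simp: G.moore_proj_def H.moore_proj_def map_kill_faces)

lemma map_moore: "x \<in> G.N n \<Longrightarrow> h n x \<in> H.N n"
  by (cases n) (auto simp: G.moore_Suc_iff H.moore_Suc_iff G.moore_0 H.moore_0 map_closed map_face[symmetric] map_one)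

lemma moore_surj:
  assumes surj: "h n ` carrier (G n) = carrier (H n)" and p: "p \<in> H.N n"
  obtains y where "y \<in> G.N n" "h n y = p"
proof -
  obtain y where y: "y \<in> carrier (G n)" "h n y = p"
    using surj H.moore_closed[OF p] by (metis imageE)
  then have "h n (G.moore_proj n y) = p" using map_moore_proj H.moore_proj_id[OF p] by simp
  with G.moore_proj_in_moore[OF y(1)] that show ?thesis by blast
qed

end

section \<open>Extending chain maps of Moore complexes to simplicial maps\<close>

locale moore_chain_map = D: simplicial_abelian D dD sD + Q: simplicial_abelian Q dQ sQ
  for D :: "nat \<Rightarrow> ('a, 'm1) monoid_scheme" and dD sD
    and Q :: "nat \<Rightarrow> ('b, 'm2) monoid_scheme" and dQ sQ +
  fixes psi :: "nat \<Rightarrow> 'a \<Rightarrow> 'b"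
  assumes psi_hom: "psi n \<in> hom (D n) (Q n)"
    and psi_moore: "x \<in> D.N n \<Longrightarrow> psi n x \<in> Q.N n"
    and psi_face0: "x \<in> D.N (Suc q) \<Longrightarrow> dQ q 0 (psi (Suc q) x) = psi q (dD q 0 x)"
begin

lemma psi_closed: "x \<in> carrier (D n) \<Longrightarrow> psi n x \<in> carrier (Q n)"
  by (rule hom_in_carrier[OF psi_hom])

text \<open>By \<open>D.kill_face_mult_degen\<close> every simplex is the product of a simplex with one nontrivial
  face fewer and a degenerate simplex. So \<open>ext_upto q t j\<close> applies \<open>psi\<close> once the faces
  \<open>j, \<dots>, 1\<close> have been killed, and the previous level \<open>t\<close> to the faces split off on the way.\<close>

fun ext_upto :: "nat \<Rightarrow> ('a \<Rightarrow> 'b) \<Rightarrow> nat \<Rightarrow> 'a \<Rightarrow> 'b" where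
  "ext_upto q t 0 x = psi (Suc q) x"
| "ext_upto q t (Suc j) x = ext_upto q t j (D.kill_face q j x) \<otimes>\<^bsub>Q (Suc q)\<^esub> sQ q j (t (dD q (Suc j) x))"

declare ext_upto.simps(2) [simp del]

fun ext :: "nat \<Rightarrow> 'a \<Rightarrow> 'b" where
  "ext 0 = psi 0"
| "ext (Suc q) = ext_upto q (ext q) (Suc q)"

context
  fixes q :: nat and t :: "'a \<Rightarrow> 'b"
  assumes t_hom: "t \<in> hom (D q) (Q q)"
    and t_moore: "\<And>x. x \<in> D.N q \<Longrightarrow> t x = psi q x"
    and t_face: "\<And>q' i x. q = Suc q' \<Longrightarrow> i \<le> q \<Longrightarrow> x \<in> carrier (D q) \<Longrightarrow> ext q' (dD q' i x) = dQ q' i (t x)"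
    and t_degen: "\<And>q' i y. q = Suc q' \<Longrightarrow> i \<le> q' \<Longrightarrow> y \<in> carrier (D q') \<Longrightarrow> t (sD q' i y) = sQ q' i (ext q' y)"
begin

lemma t_closed: "x \<in> carrier (D q) \<Longrightarrow> t x \<in> carrier (Q q)"
  by (rule hom_in_carrier[OF t_hom])
lemma t_mult: "x \<in> carrier (D q) \<Longrightarrow> y \<in> carrier (D q) \<Longrightarrow> t (x \<otimes>\<^bsub>D q\<^esub> y) = t x \<otimes>\<^bsub>Q q\<^esub> t y"
  by (rule hom_mult[OF t_hom])
lemma t_one: "t \<one>\<^bsub>D q\<^esub> = \<one>\<^bsub>Q q\<^esub>"
  by (rule hom_one[OF t_hom D.level_group Q.level_group])

lemma ext_upto_hom: "j \<le> Suc q \<Longrightarrow> ext_upto q t j \<in> hom (D (Suc q)) (Q (Suc q))"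
proof (induction j)
  case 0
  have "ext_upto q t 0 = psi (Suc q)" by (simp add: fun_eq_iff)
  then show ?case using psi_hom by simp
next
  case (Suc j)
  interpret comm_group "Q (Suc q)" by (rule Q.level_comm_group)
  have "(\<lambda>x. ext_upto q t j (D.kill_face q j x)) \<in> hom (D (Suc q)) (Q (Suc q))"
    by (rule hom_comp[OF D.kill_face_hom Suc.IH]) (use Suc.prems in auto)
  moreover have "(\<lambda>x. sQ q j (t (dD q (Suc j) x))) \<in> hom (D (Suc q)) (Q (Suc q))"
    by (rule hom_comp[OF hom_comp[OF D.face_hom t_hom] Q.degen_hom]) (use Suc.prems in auto)
  ultimately show ?case
    by (auto simp: fun_eq_iff ext_upto.simps(2) dest: hom_group_mult)
qed

lemma ext_upto_closed: "j \<le> Suc q \<Longrightarrow> x \<in> carrier (D (Suc q)) \<Longrightarrow> ext_upto q t j x \<in> carrier (Q (Suc q))"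
  by (rule hom_in_carrier[OF ext_upto_hom])

lemma ext_upto_one: "j \<le> Suc q \<Longrightarrow> ext_upto q t j \<one>\<^bsub>D (Suc q)\<^esub> = \<one>\<^bsub>Q (Suc q)\<^esub>"
  by (rule hom_one[OF ext_upto_hom D.level_group Q.level_group])

lemma ext_upto_moore: "j \<le> Suc q \<Longrightarrow> x \<in> D.N (Suc q) \<Longrightarrow> ext_upto q t j x = psi (Suc q) x"
proof (induction j)
  case (Suc j)
  then have "dD q (Suc j) x = \<one>\<^bsub>D q\<^esub>" by (auto simp: D.moore_Suc_iff)
  with Suc show ?case
    by (simp add: ext_upto.simps(2) D.kill_face_moore t_one Q.degen_one psi_closed D.moore_closed)
qed simp

lemma face_degen_t_commute:
  assumes j: "j \<le> q" and i: "i \<le> Suc q" and y: "y \<in> carrier (D q)"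
  shows "dQ q i (sQ q j (t y)) = t (dD q i (sD q j y))"
proof -
  consider "i = j" | "i = Suc j" | "i < j" | "Suc j < i" by linarith
  then show ?thesis
  proof cases
    case 1
    then show ?thesis using j y by (simp add: Q.face_degen_same D.face_degen_same t_closed)
  next
    case 2
    then show ?thesis using j y by (simp add: Q.face_Suc_degen_same D.face_Suc_degen_same t_closed)
  next
    case 3
    then obtain q' where q: "q = Suc q'" using j by (cases q) auto
    have "dQ q i (sQ q j (t y)) = sQ q' (j - 1) (dQ q' i (t y))"
      using Q.face_degen_less[of i j q' "t y"] 3 j q y t_closed by auto
    also have "dQ q' i (t y) = ext q' (dD q' i y)" using t_face[of q' i y] q 3 j y by auto
    also have "sQ q' (j - 1) (ext q' (dD q' i y)) = t (sD q' (j - 1) (dD q' i y))"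
      using t_degen[of q' "j - 1" "dD q' i y"] q 3 j y D.face_closed[of i q' y] by auto
    also have "sD q' (j - 1) (dD q' i y) = dD q i (sD q j y)"
      using D.face_degen_less[of i j q' y] 3 j q y by auto
    finally show ?thesis .
  next
    case 4
    then obtain q' where q: "q = Suc q'" using i by (cases q) auto
    have "dQ q i (sQ q j (t y)) = sQ q' j (dQ q' (i - 1) (t y))"
      using Q.face_degen_greater[of j i q' "t y"] 4 i q y t_closed by auto
    also have "dQ q' (i - 1) (t y) = ext q' (dD q' (i - 1) y)" using t_face[of q' "i - 1" y] q 4 i y by auto
    also have "sQ q' j (ext q' (dD q' (i - 1) y)) = t (sD q' j (dD q' (i - 1) y))"
      using t_degen[of q' j "dD q' (i - 1) y"] q 4 i j y D.face_closed[of "i - 1" q' y] by auto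
    also have "sD q' j (dD q' (i - 1) y) = dD q i (sD q j y)"
      using D.face_degen_greater[of j i q' y] 4 i q y by auto
    finally show ?thesis .
  qed
qed

lemma ext_upto_face:
  "j \<le> Suc q \<Longrightarrow> x \<in> carrier (D (Suc q)) \<Longrightarrow> (\<And>l. j < l \<Longrightarrow> l \<le> Suc q \<Longrightarrow> dD q l x = \<one>\<^bsub>D q\<^esub>) \<Longrightarrow>
   i \<le> Suc q \<Longrightarrow> dQ q i (ext_upto q t j x) = t (dD q i x)"
proof (induction j arbitrary: x)
  case 0
  then have x: "x \<in> D.N (Suc q)" by (auto simp: D.moore_Suc_iff)
  show ?case
  proof (cases "i = 0")
    case True
    then show ?thesis using x psi_face0 t_moore D.face0_moore by simp
  next
    case False
    then have "dQ q i (psi (Suc q) x) = \<one>\<^bsub>Q q\<^esub>" and "dD q i x = \<one>\<^bsub>D q\<^esub>"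
      using psi_moore[OF x] x 0 by (auto simp: Q.moore_Suc_iff D.moore_Suc_iff)
    then show ?thesis by (simp add: t_one)
  qed
next
  case (Suc j)
  define y where "y = dD q (Suc j) x"
  have j: "j \<le> q" and y: "y \<in> carrier (D q)" and ex: "D.kill_face q j x \<in> carrier (D (Suc q))"
    and sy: "sD q j y \<in> carrier (D (Suc q))"
    using Suc.prems D.face_closed D.kill_face_closed D.degen_closed by (auto simp: y_def)
  have "dQ q i (ext_upto q t (Suc j) x) = dQ q i (ext_upto q t j (D.kill_face q j x)) \<otimes>\<^bsub>Q q\<^esub> dQ q i (sQ q j (t y))"
    unfolding y_def[symmetric] ext_upto.simps(2)
    by (rule Q.face_mult) (use Suc.prems j ex y in \<open>auto intro: ext_upto_closed Q.degen_closed t_closed\<close>)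
  also have "dQ q i (ext_upto q t j (D.kill_face q j x)) = t (dD q i (D.kill_face q j x))"
    by (rule Suc.IH) (use Suc.prems j ex D.kill_face_faces in auto)
  also have "dQ q i (sQ q j (t y)) = t (dD q i (sD q j y))"
    by (rule face_degen_t_commute) (use Suc.prems j y in auto)
  also have "t (dD q i (D.kill_face q j x)) \<otimes>\<^bsub>Q q\<^esub> t (dD q i (sD q j y))
      = t (dD q i (D.kill_face q j x \<otimes>\<^bsub>D (Suc q)\<^esub> sD q j y))"
    using Suc.prems ex sy by (simp add: t_mult D.face_closed D.face_mult)
  also have "D.kill_face q j x \<otimes>\<^bsub>D (Suc q)\<^esub> sD q j y = x"
    unfolding y_def by (rule D.kill_face_mult_degen) (use j Suc.prems in auto)
  finally show ?case .
qed

lemma ext_upto_degen: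
  "k < j \<Longrightarrow> j \<le> Suc q \<Longrightarrow> y \<in> carrier (D q) \<Longrightarrow> ext_upto q t j (sD q k y) = sQ q k (t y)"
proof (induction j arbitrary: y)
  case (Suc j)
  have k: "k \<le> q" using Suc.prems by auto
  show ?case
  proof (cases "j = k")
    case True
    have "D.kill_face q k (sD q k y) = \<one>\<^bsub>D (Suc q)\<^esub>"
      unfolding D.kill_face_def using Suc.prems k D.degen_closed by (simp add: D.face_Suc_degen_same)
    then show ?thesis using True Suc.prems k
      by (simp add: ext_upto.simps(2) ext_upto_one D.face_Suc_degen_same Q.degen_closed t_closed)
  next
    case False
    then have kj: "k < j" "j \<le> q" using Suc.prems by auto
    then obtain q' where q: "q = Suc q'" by (cases q) auto
    define z where "z = dD q' j y"
    define e where "e = D.kill_face q' (j - 1) y"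
    have y: "y \<in> carrier (D (Suc q'))" and z: "z \<in> carrier (D q')"
      and e: "e \<in> carrier (D q)" and sz: "sD q' (j - 1) z \<in> carrier (D q)"
      using Suc.prems q kj D.face_closed D.kill_face_closed D.degen_closed by (auto simp: z_def e_def)
    have "ext_upto q t (Suc j) (sD q k y) = ext_upto q t j (sD q k e) \<otimes>\<^bsub>Q (Suc q)\<^esub> sQ q j (t (sD q' k z))"
      using D.kill_face_degen_below[of k j q' y] D.face_degen_greater[of k "Suc j" q' y] kj q y
      by (simp add: ext_upto.simps(2) e_def z_def)
    also have "ext_upto q t j (sD q k e) = sQ q k (t e)"
      by (rule Suc.IH) (use kj e in auto)
    also have "sQ q j (t (sD q' k z)) = sQ q k (t (sD q' (j - 1) z))"
      using t_degen[of q' k z] t_degen[of q' "j - 1" z] t_face[of q' j y] Q.degen_degen[of k "j - 1" q']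
        Q.face_closed[of j q' "t y"] t_closed[of y] q kj y z by (auto simp: z_def)
    also have "sQ q k (t e) \<otimes>\<^bsub>Q (Suc q)\<^esub> sQ q k (t (sD q' (j - 1) z))
        = sQ q k (t (e \<otimes>\<^bsub>D q\<^esub> sD q' (j - 1) z))"
      using e sz k by (simp add: Q.degen_mult t_closed t_mult)
    also have "e \<otimes>\<^bsub>D q\<^esub> sD q' (j - 1) z = y"
      using D.kill_face_mult_degen[of "j - 1" q' y] kj q y by (simp add: e_def z_def)
    finally show ?thesis .
  qed
qed simp

end

lemma ext_simplicial_at_level:
  "ext q \<in> hom (D q) (Q q) \<and> (\<forall>x\<in>D.N q. ext q x = psi q x) \<and>
   (\<forall>q' i x. q = Suc q' \<longrightarrow> i \<le> q \<longrightarrow> x \<in> carrier (D q) \<longrightarrow> ext q' (dD q' i x) = dQ q' i (ext q x)) \<and>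
   (\<forall>q' i y. q = Suc q' \<longrightarrow> i \<le> q' \<longrightarrow> y \<in> carrier (D q') \<longrightarrow> ext q (sD q' i y) = sQ q' i (ext q' y))"
proof (induction q)
  case 0
  then show ?case using psi_hom by simp
next
  case (Suc q)
  then have IH: "ext q \<in> hom (D q) (Q q)" "\<And>x. x \<in> D.N q \<Longrightarrow> ext q x = psi q x"
    "\<And>q' i x. q = Suc q' \<Longrightarrow> i \<le> q \<Longrightarrow> x \<in> carrier (D q) \<Longrightarrow> ext q' (dD q' i x) = dQ q' i (ext q x)"
    "\<And>q' i y. q = Suc q' \<Longrightarrow> i \<le> q' \<Longrightarrow> y \<in> carrier (D q') \<Longrightarrow> ext q (sD q' i y) = sQ q' i (ext q' y)"
    by auto
  show ?case
    using ext_upto_hom[OF IH, of "Suc q"] ext_upto_moore[OF IH, of "Suc q"]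
      ext_upto_face[OF IH, of "Suc q"] ext_upto_degen[OF IH, of _ "Suc q"]
    by (auto simp: not_le[symmetric])
qed

lemma ext_hom: "ext q \<in> hom (D q) (Q q)"
  using ext_simplicial_at_level by blast

lemma ext_closed: "x \<in> carrier (D q) \<Longrightarrow> ext q x \<in> carrier (Q q)"
  by (rule hom_in_carrier[OF ext_hom])

lemma simplicial_hom_ext: "simplicial_hom D dD sD Q dQ sQ ext"
  unfolding simplicial_hom_def using ext_simplicial_at_level by blast

lemma ext_upto_ext_closed:
  "j \<le> Suc q \<Longrightarrow> x \<in> carrier (D (Suc q)) \<Longrightarrow> ext_upto q (ext q) j x \<in> carrier (Q (Suc q))"
  using ext_simplicial_at_level[of q] by (intro ext_upto_closed) auto

end

section \<open>Splitting the Moore complex of a free connected simplicial group\<close>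

context simplicial_abelian
begin

definition cycle_retraction :: "nat \<Rightarrow> ('a \<Rightarrow> 'a) \<Rightarrow> bool" where
  "cycle_retraction k r \<longleftrightarrow>
     r \<in> hom (G k) (G k) \<and> (\<forall>x\<in>carrier (G k). r x \<in> cycles k) \<and> (\<forall>z\<in>cycles k. r z = z)"

definition face0_section :: "nat \<Rightarrow> ('a \<Rightarrow> 'a) \<Rightarrow> ('a \<Rightarrow> 'a) \<Rightarrow> bool" where
  "face0_section k r l \<longleftrightarrow>
     l \<in> hom (G k) (G (Suc k)) \<and> (\<forall>x\<in>carrier (G k). l x \<in> N (Suc k) \<and> d k 0 (l x) = r x)"

lemma face0_section_exists:
  assumes "G k \<cong> free_Abelian_group B" and bounded: "cycles k \<subseteq> d k 0 ` N (Suc k)"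
    and r: "cycle_retraction k r"
  obtains l where "face0_section k r l"
proof -
  have "r \<in> hom (G k) (G k)" "r ` carrier (G k) \<subseteq> d k 0 ` N (Suc k)"
    using r bounded unfolding cycle_retraction_def by blast+
  then show ?thesis
    using free_Abelian_group_lift_into_subgroup[OF assms(1) level_group level_comm_group level_group
        face_hom moore_subgroup] that
    unfolding face0_section_def by (metis le0)
qed

text \<open>A section \<open>l\<close> of \<open>d\<^sub>0\<close> over the cycles in degree \<open>k\<close> yields the retraction
  \<open>x \<mapsto> \<pi> x - l (d\<^sub>0 (\<pi> x))\<close> onto the cycles in degree \<open>Suc k\<close>, where \<open>\<pi>\<close> is \<open>moore_proj\<close>.\<close>

fun induced_retraction :: "nat \<Rightarrow> ('a \<Rightarrow> 'a) \<Rightarrow> 'a \<Rightarrow> 'a" where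
  "induced_retraction 0 l x = x"
| "induced_retraction (Suc k) l x =
     moore_proj (Suc k) x \<otimes>\<^bsub>G (Suc k)\<^esub> inv\<^bsub>G (Suc k)\<^esub> (l (d k 0 (moore_proj (Suc k) x)))"

lemma cycle_retraction_0: "cycle_retraction 0 (induced_retraction 0 l)"
  unfolding cycle_retraction_def cycles_def by (simp add: hom_def moore_0)

lemma induced_retraction_hom:
  assumes l: "l \<in> hom (G k) (G (Suc k))"
  shows "induced_retraction (Suc k) l \<in> hom (G (Suc k)) (G (Suc k))"
proof -
  interpret comm_group "G (Suc k)" by (rule level_comm_group)
  have "(\<lambda>x. l (d k 0 (moore_proj (Suc k) x))) \<in> hom (G (Suc k)) (G (Suc k))"
    by (rule hom_comp[OF hom_comp[OF moore_proj_hom face_hom] l]) simp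
  then have "(\<lambda>x. moore_proj (Suc k) x \<otimes>\<^bsub>G (Suc k)\<^esub> inv\<^bsub>G (Suc k)\<^esub> (l (d k 0 (moore_proj (Suc k) x))))
      \<in> hom (G (Suc k)) (G (Suc k))"
    by (intro hom_group_mult moore_proj_hom hom_group_inv)
  moreover have "induced_retraction (Suc k) l
      = (\<lambda>x. moore_proj (Suc k) x \<otimes>\<^bsub>G (Suc k)\<^esub> inv\<^bsub>G (Suc k)\<^esub> (l (d k 0 (moore_proj (Suc k) x))))"
    by (rule ext) simp
  ultimately show ?thesis by simp
qed

lemma induced_retraction_mult_section:
  assumes l: "l \<in> hom (G k) (G (Suc k))" and x: "x \<in> N (Suc k)"
  shows "induced_retraction (Suc k) l x \<otimes>\<^bsub>G (Suc k)\<^esub> l (d k 0 x) = x"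
  using hom_in_carrier[OF l] moore_closed[OF x] face_closed[of 0 k x]
  by (simp add: moore_proj_id[OF x] m_assoc group.l_inv[OF level_group])

lemma cycle_retraction_Suc:
  assumes r: "cycle_retraction k r" and l: "face0_section k r l"
  shows "cycle_retraction (Suc k) (induced_retraction (Suc k) l)"
proof -
  have lh: "l \<in> hom (G k) (G (Suc k))"
    and lN: "\<And>x. x \<in> carrier (G k) \<Longrightarrow> l x \<in> N (Suc k) \<and> d k 0 (l x) = r x"
    and rZ: "\<And>z. z \<in> cycles k \<Longrightarrow> r z = z"
    using l r unfolding face0_section_def cycle_retraction_def by auto
  have "induced_retraction (Suc k) l x \<in> cycles (Suc k)" if x: "x \<in> carrier (G (Suc k))" for x
  proof -
    define w where "w = d k 0 (moore_proj (Suc k) x)"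
    have p: "moore_proj (Suc k) x \<in> N (Suc k)" using moore_proj_in_moore[OF x] .
    have w: "w \<in> cycles k" unfolding w_def by (rule face0_cycles[OF p])
    then have wc: "w \<in> carrier (G k)" using cycles_moore moore_closed by blast
    have "d k 0 (moore_proj (Suc k) x \<otimes>\<^bsub>G (Suc k)\<^esub> inv\<^bsub>G (Suc k)\<^esub> l w) = w \<otimes>\<^bsub>G k\<^esub> inv\<^bsub>G k\<^esub> r w"
      using moore_closed[OF p] lN[OF wc] moore_closed by (simp add: face_mult face_inv w_def)
    also have "\<dots> = \<one>\<^bsub>G k\<^esub>" using rZ[OF w] wc by simp
    finally show ?thesis
      using moore_mult[OF p moore_inv] lN[OF wc] unfolding cycles_def by (simp add: w_def)
  qed
  moreover have "induced_retraction (Suc k) l z = z" if z: "z \<in> cycles (Suc k)" for z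
    using z moore_closed[OF cycles_moore[OF z]] hom_one[OF lh level_group level_group]
    by (simp add: cycles_def moore_proj_id)
  ultimately show ?thesis
    unfolding cycle_retraction_def using induced_retraction_hom[OF lh] by blast
qed

end

locale lifting_setup = D: simplicial_abelian D dD sD + Q: simplicial_abelian Q dQ sQ + P: simplicial_abelian P dP sP
  for D :: "nat \<Rightarrow> ('a, 'm1) monoid_scheme" and dD sD
    and Q :: "nat \<Rightarrow> ('b, 'm2) monoid_scheme" and dQ sQ
    and P :: "nat \<Rightarrow> ('c, 'm3) monoid_scheme" and dP sP +
  fixes s :: "nat \<Rightarrow> 'a \<Rightarrow> 'c" and f :: "nat \<Rightarrow> 'b \<Rightarrow> 'c"
  assumes s_map: "simplicial_hom D dD sD P dP sP s" and f_map: "simplicial_hom Q dQ sQ P dP sP f"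
begin

sublocale S: simplicial_map D dD sD P dP sP s
  by (simp add: simplicial_map_def simplicial_map_axioms_def s_map D.simplicial_abelian_axioms
      P.simplicial_abelian_axioms)

sublocale F: simplicial_map Q dQ sQ P dP sP f
  by (simp add: simplicial_map_def simplicial_map_axioms_def f_map Q.simplicial_abelian_axioms
      P.simplicial_abelian_axioms)

lemma skeleton_lifts:
  assumes t: "simplicial_hom D dD sD Q dQ sQ t"
    and lifts: "\<And>n x. n \<le> m \<Longrightarrow> x \<in> carrier (D n) \<Longrightarrow> f n (t n x) = s n x"
    and x: "(q, x) \<in> skeleton D dD sD m"
  shows "f q (t q x) = s q x"
proof -
  interpret T: simplicial_map D dD sD Q dQ sQ t
    by (simp add: simplicial_map_def simplicial_map_axioms_def t D.simplicial_abelian_axioms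
        Q.simplicial_abelian_axioms)
  from x have "x \<in> carrier (D q) \<and> f q (t q x) = s q x"
  proof (induction rule: skeleton.induct)
    case (gen k x)
    then show ?case using lifts by blast
  next
    case (face q x i)
    then show ?case by (simp add: D.face_closed T.map_face T.map_closed F.map_face S.map_face)
  next
    case (degen q x i)
    then show ?case by (simp add: D.degen_closed T.map_degen T.map_closed F.map_degen S.map_degen)
  qed
  then show ?thesis ..
qed

end

locale moore_chain_lift =
  lifting_setup D dD sD Q dQ sQ P dP sP s f + moore_chain_map D dD sD Q dQ sQ psi
  for D :: "nat \<Rightarrow> ('a, 'm1) monoid_scheme" and dD sD
    and Q :: "nat \<Rightarrow> ('b, 'm2) monoid_scheme" and dQ sQ
    and P :: "nat \<Rightarrow> ('c, 'm3) monoid_scheme" and dP sP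
    and s :: "nat \<Rightarrow> 'a \<Rightarrow> 'c" and f :: "nat \<Rightarrow> 'b \<Rightarrow> 'c" and psi :: "nat \<Rightarrow> 'a \<Rightarrow> 'b" +
  fixes m :: nat
  assumes psi_lifts: "n \<le> m \<Longrightarrow> x \<in> D.N n \<Longrightarrow> f n (psi n x) = s n x"
begin

lemma ext_upto_lifts:
  assumes below: "\<And>y. y \<in> carrier (D q) \<Longrightarrow> f q (ext q y) = s q y" and q: "Suc q \<le> m"
  shows "j \<le> Suc q \<Longrightarrow> x \<in> carrier (D (Suc q)) \<Longrightarrow> (\<And>l. j < l \<Longrightarrow> l \<le> Suc q \<Longrightarrow> dD q l x = \<one>\<^bsub>D q\<^esub>) \<Longrightarrow>
    f (Suc q) (ext_upto q (ext q) j x) = s (Suc q) x"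
proof (induction j arbitrary: x)
  case 0
  then have "x \<in> D.N (Suc q)" by (auto simp: D.moore_Suc_iff)
  then show ?case using psi_lifts q by simp
next
  case (Suc j)
  define y where "y = dD q (Suc j) x"
  have j: "j \<le> q" and y: "y \<in> carrier (D q)" and ex: "D.kill_face q j x \<in> carrier (D (Suc q))"
    and sy: "sD q j y \<in> carrier (D (Suc q))"
    using Suc.prems D.face_closed D.kill_face_closed D.degen_closed by (auto simp: y_def)
  have "f (Suc q) (ext_upto q (ext q) (Suc j) x)
      = f (Suc q) (ext_upto q (ext q) j (D.kill_face q j x)) \<otimes>\<^bsub>P (Suc q)\<^esub> f (Suc q) (sQ q j (ext q y))"
    unfolding y_def[symmetric] ext_upto.simps(2)
    by (rule F.map_mult) (use Suc.prems j ex y in \<open>auto intro: ext_upto_ext_closed Q.degen_closed ext_closed\<close>)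
  also have "f (Suc q) (ext_upto q (ext q) j (D.kill_face q j x)) = s (Suc q) (D.kill_face q j x)"
    by (rule Suc.IH) (use Suc.prems j ex D.kill_face_faces in auto)
  also have "f (Suc q) (sQ q j (ext q y)) = s (Suc q) (sD q j y)"
    using F.map_degen[of j q "ext q y"] S.map_degen[of j q y] below[OF y] j y ext_closed by simp
  also have "s (Suc q) (D.kill_face q j x) \<otimes>\<^bsub>P (Suc q)\<^esub> s (Suc q) (sD q j y) = s (Suc q) x"
    using S.map_mult[OF ex sy] D.kill_face_mult_degen[of j q x] j Suc.prems by (simp add: y_def)
  finally show ?case .
qed

lemma ext_lifts: "n \<le> m \<Longrightarrow> x \<in> carrier (D n) \<Longrightarrow> f n (ext n x) = s n x"
proof (induction n arbitrary: x)
  case 0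
  then show ?case using psi_lifts by (simp add: D.moore_0)
next
  case (Suc q)
  then show ?case using ext_upto_lifts[of q "Suc q" x] by (simp add: not_le[symmetric])
qed

end

locale lifting_problem = lifting_setup D dD sD Q dQ sQ P dP sP s f
  for D :: "nat \<Rightarrow> ('a, 'm1) monoid_scheme" and dD sD
    and Q :: "nat \<Rightarrow> ('b, 'm2) monoid_scheme" and dQ sQ
    and P :: "nat \<Rightarrow> ('c, 'm3) monoid_scheme" and dP sP
    and s :: "nat \<Rightarrow> 'a \<Rightarrow> 'c" and f :: "nat \<Rightarrow> 'b \<Rightarrow> 'c" +
  fixes m :: nat
  assumes free: "free_simplicial D" and connected: "m_connected m D dD"
    and surj: "\<forall>q. f q ` carrier (Q q) = carrier (P q)"
begin

lemma cycles_bounded: "k \<le> m \<Longrightarrow> D.cycles k \<subseteq> dD k 0 ` D.N (Suc k)"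
proof
  fix z assume "k \<le> m" "z \<in> D.cycles k"
  moreover have "\<forall>y\<in>D.N k. (case k of 0 \<Rightarrow> True | Suc q \<Rightarrow> dD q 0 y = \<one>\<^bsub>D q\<^esub>) \<longrightarrow>
      (\<exists>x\<in>D.N (Suc k). dD k 0 x = y)"
    using connected \<open>k \<le> m\<close> unfolding m_connected_def by blast
  ultimately obtain x where "x \<in> D.N (Suc k)" "dD k 0 x = z"
    by (cases k) (auto simp: D.cycles_def)
  then show "z \<in> dD k 0 ` D.N (Suc k)" by blast
qed

primrec lam :: "nat \<Rightarrow> 'a \<Rightarrow> 'a" where
  "lam 0 = undefined"
| "lam (Suc k) = (SOME l. D.face0_section k (D.induced_retraction k (lam k)) l)"

declare lam.simps(2) [simp del]

definition rho :: "nat \<Rightarrow> 'a \<Rightarrow> 'a" where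
  "rho k = D.induced_retraction k (lam k)"

lemma lam_Suc: "lam (Suc k) = (SOME l. D.face0_section k (rho k) l)"
  by (simp add: rho_def lam.simps(2))

lemma face0_section_lam:
  assumes k: "k \<le> m" and r: "D.cycle_retraction k (rho k)"
  shows "D.face0_section k (rho k) (lam (Suc k))"
proof -
  obtain B :: "'a set" where "D k \<cong> free_Abelian_group B" using free free_simplicial_def by blast
  then obtain l where "D.face0_section k (rho k) l"
    using D.face0_section_exists cycles_bounded[OF k] r by blast
  then show ?thesis unfolding lam_Suc by (rule someI[where P = "D.face0_section k (rho k)"])
qed

lemma rho_lam: "k \<le> m \<Longrightarrow> D.cycle_retraction k (rho k) \<and> D.face0_section k (rho k) (lam (Suc k))"
proof (induction k)
  case 0
  have "D.cycle_retraction 0 (rho 0)" unfolding rho_def by (rule D.cycle_retraction_0)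
  then show ?case using face0_section_lam by blast
next
  case (Suc k)
  then have "D.cycle_retraction k (rho k)" "D.face0_section k (rho k) (lam (Suc k))"
    by simp_all
  then have "D.cycle_retraction (Suc k) (D.induced_retraction (Suc k) (lam (Suc k)))"
    by (rule D.cycle_retraction_Suc)
  then have "D.cycle_retraction (Suc k) (rho (Suc k))"
    by (simp only: rho_def)
  then show ?case using face0_section_lam Suc.prems by blast
qed

lemma rho_hom: "k \<le> m \<Longrightarrow> rho k \<in> hom (D k) (D k)"
  and rho_cycles: "k \<le> m \<Longrightarrow> x \<in> carrier (D k) \<Longrightarrow> rho k x \<in> D.cycles k"
  and rho_id: "k \<le> m \<Longrightarrow> z \<in> D.cycles k \<Longrightarrow> rho k z = z"
  and lam_hom: "k \<le> m \<Longrightarrow> lam (Suc k) \<in> hom (D k) (D (Suc k))"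
  and lam_moore: "k \<le> m \<Longrightarrow> x \<in> carrier (D k) \<Longrightarrow> lam (Suc k) x \<in> D.N (Suc k)"
  and lam_face0: "k \<le> m \<Longrightarrow> x \<in> carrier (D k) \<Longrightarrow> dD k 0 (lam (Suc k) x) = rho k x"
  using rho_lam unfolding D.cycle_retraction_def D.face0_section_def by blast+

lemma rho_closed: "k \<le> m \<Longrightarrow> x \<in> carrier (D k) \<Longrightarrow> rho k x \<in> carrier (D k)"
  using rho_cycles D.cycles_moore D.moore_closed by blast

text \<open>Above degree \<open>m\<close> the lift is chosen trivial, so that \<open>psi\<close> below needs no case distinction.\<close>

definition lam_lifting :: "nat \<Rightarrow> ('a \<Rightarrow> 'b) \<Rightarrow> bool" where
  "lam_lifting k g \<longleftrightarrow> g \<in> hom (D k) (Q (Suc k)) \<and> (\<forall>x\<in>carrier (D k). g x \<in> Q.N (Suc k)) \<and>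
     (if k \<le> m then \<forall>x\<in>carrier (D k). f (Suc k) (g x) = s (Suc k) (lam (Suc k) x)
      else \<forall>x. g x = \<one>\<^bsub>Q (Suc k)\<^esub>)"

definition lam_lift :: "nat \<Rightarrow> 'a \<Rightarrow> 'b" where
  "lam_lift k = (SOME g. lam_lifting k g)"

lemma lam_lifting_exists: "\<exists>g. lam_lifting k g"
proof (cases "k \<le> m")
  case True
  obtain B :: "'a set" where iso: "D k \<cong> free_Abelian_group B" using free free_simplicial_def by blast
  have "(\<lambda>x. s (Suc k) (lam (Suc k) x)) \<in> hom (D k) (P (Suc k))"
    by (rule hom_comp[OF lam_hom[OF True] S.map_hom])
  moreover have "(\<lambda>x. s (Suc k) (lam (Suc k) x)) ` carrier (D k) \<subseteq> f (Suc k) ` Q.N (Suc k)"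
  proof (rule image_subsetI)
    fix x assume "x \<in> carrier (D k)"
    then have "s (Suc k) (lam (Suc k) x) \<in> P.N (Suc k)"
      using S.map_moore lam_moore True by blast
    then obtain y where "y \<in> Q.N (Suc k)" "f (Suc k) y = s (Suc k) (lam (Suc k) x)"
      using F.moore_surj surj by blast
    then show "s (Suc k) (lam (Suc k) x) \<in> f (Suc k) ` Q.N (Suc k)" by (metis image_eqI)
  qed
  ultimately obtain g where "g \<in> hom (D k) (Q (Suc k))"
    "\<And>x. x \<in> carrier (D k) \<Longrightarrow> g x \<in> Q.N (Suc k) \<and> f (Suc k) (g x) = s (Suc k) (lam (Suc k) x)"
    using free_Abelian_group_lift_into_subgroup[OF iso D.level_group Q.level_comm_group P.level_group
        F.map_hom Q.moore_subgroup] by blast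
  then show ?thesis using True unfolding lam_lifting_def by auto
next
  case False
  then have "lam_lifting k (\<lambda>x. \<one>\<^bsub>Q (Suc k)\<^esub>)"
    unfolding lam_lifting_def using trivial_hom[OF Q.level_group] Q.moore_one by simp
  then show ?thesis by blast
qed

lemma lam_lift_hom: "lam_lift k \<in> hom (D k) (Q (Suc k))"
  and lam_lift_moore: "x \<in> carrier (D k) \<Longrightarrow> lam_lift k x \<in> Q.N (Suc k)"
  and lam_lift_lifts: "k \<le> m \<Longrightarrow> x \<in> carrier (D k) \<Longrightarrow> f (Suc k) (lam_lift k x) = s (Suc k) (lam (Suc k) x)"
  and lam_lift_trivial: "\<not> k \<le> m \<Longrightarrow> lam_lift k x = \<one>\<^bsub>Q (Suc k)\<^esub>"
  using someI_ex[OF lam_lifting_exists, of k, folded lam_lift_def] unfolding lam_lifting_def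
  by (auto split: if_splits)

lemma lam_lift_one: "lam_lift k \<one>\<^bsub>D k\<^esub> = \<one>\<^bsub>Q (Suc k)\<^esub>"
  by (rule hom_one[OF lam_lift_hom D.level_group Q.level_group])

text \<open>On a cycle \<open>psi\<close> is \<open>d\<^sub>0 \<circ> lam_lift\<close>, which makes it a chain map; and \<open>f \<circ> psi\<close> is
  \<open>s \<circ> rho + s \<circ> lam \<circ> d\<^sub>0\<close>, which is \<open>s\<close> on the Moore complex.\<close>

definition psi :: "nat \<Rightarrow> 'a \<Rightarrow> 'b" where
  "psi n y = dQ n 0 (lam_lift n (rho n y)) \<otimes>\<^bsub>Q n\<^esub> (case n of 0 \<Rightarrow> \<one>\<^bsub>Q 0\<^esub> | Suc q \<Rightarrow> lam_lift q (dD q 0 y))"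

lemma psi_hom: "psi n \<in> hom (D n) (Q n)"
proof -
  interpret comm_group "Q n" by (rule Q.level_comm_group)
  have "(\<lambda>y. dQ n 0 (lam_lift n (rho n y))) \<in> hom (D n) (Q n)"
  proof (cases "n \<le> m")
    case True
    then show ?thesis by (intro hom_comp[OF hom_comp[OF rho_hom lam_lift_hom] Q.face_hom]) auto
  next
    case False
    then show ?thesis using trivial_hom[OF is_group] by (simp add: lam_lift_trivial Q.face_one)
  qed
  moreover have "(\<lambda>y. case n of 0 \<Rightarrow> \<one>\<^bsub>Q 0\<^esub> | Suc q \<Rightarrow> lam_lift q (dD q 0 y)) \<in> hom (D n) (Q n)"
  proof (cases n)
    case 0
    then show ?thesis using trivial_hom[OF is_group] by simp
  next
    case (Suc q)
    then show ?thesis using hom_comp[OF D.face_hom[of 0 q] lam_lift_hom[of q]] by simp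
  qed
  ultimately show ?thesis
    unfolding psi_def[abs_def] by (rule hom_group_mult)
qed

lemma psi_moore: "y \<in> carrier (D n) \<Longrightarrow> psi n y \<in> Q.N n"
proof -
  assume y: "y \<in> carrier (D n)"
  have "dQ n 0 (lam_lift n (rho n y)) \<in> Q.N n"
  proof (cases "n \<le> m")
    case True
    then show ?thesis using Q.face0_moore lam_lift_moore rho_closed y by simp
  next
    case False
    then show ?thesis using Q.moore_one by (simp add: lam_lift_trivial Q.face_one)
  qed
  moreover have "(case n of 0 \<Rightarrow> \<one>\<^bsub>Q 0\<^esub> | Suc q \<Rightarrow> lam_lift q (dD q 0 y)) \<in> Q.N n"
    using Q.moore_one lam_lift_moore D.face_closed y by (cases n) auto
  ultimately show ?thesis
    unfolding psi_def by (rule Q.moore_mult)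
qed

lemma psi_cycle: "z \<in> D.cycles n \<Longrightarrow> psi n z = dQ n 0 (lam_lift n z)"
proof -
  assume z: "z \<in> D.cycles n"
  then have zc: "z \<in> carrier (D n)" using D.cycles_moore D.moore_closed by blast
  have "dQ n 0 (lam_lift n (rho n z)) = dQ n 0 (lam_lift n z)"
    by (cases "n \<le> m") (simp_all add: rho_id z lam_lift_trivial)
  moreover have "(case n of 0 \<Rightarrow> \<one>\<^bsub>Q 0\<^esub> | Suc q \<Rightarrow> lam_lift q (dD q 0 z)) = \<one>\<^bsub>Q n\<^esub>"
    using z by (cases n) (auto simp: D.cycles_def lam_lift_one)
  ultimately show ?thesis
    using Q.face_closed Q.moore_closed lam_lift_moore zc by (simp add: psi_def)
qed

lemma psi_face0: "x \<in> D.N (Suc q) \<Longrightarrow> dQ q 0 (psi (Suc q) x) = psi q (dD q 0 x)"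
proof -
  assume x: "x \<in> D.N (Suc q)"
  then have xc: "x \<in> carrier (D (Suc q))" by (rule D.moore_closed)
  have rx: "lam_lift (Suc q) (rho (Suc q) x) \<in> Q.N (Suc (Suc q))"
    using lam_lift_moore rho_closed xc
    by (cases "Suc q \<le> m") (auto simp: lam_lift_trivial Q.moore_one)
  have "dQ q 0 (psi (Suc q) x) = dQ q 0 (lam_lift q (dD q 0 x))"
    using Q.face0_face0_moore[OF rx] Q.face0_moore[OF rx] lam_lift_moore D.face_closed xc
    by (simp add: psi_def Q.face_mult Q.moore_closed Q.face_closed)
  also have "\<dots> = psi q (dD q 0 x)"
    using psi_cycle[OF D.face0_cycles[OF x]] by simp
  finally show ?thesis .
qed

lemma psi_lifts: "n \<le> m \<Longrightarrow> x \<in> D.N n \<Longrightarrow> f n (psi n x) = s n x"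
proof -
  assume n: "n \<le> m" and x: "x \<in> D.N n"
  have xc: "x \<in> carrier (D n)" using x D.moore_closed by blast
  have rc: "rho n x \<in> carrier (D n)" using rho_closed n xc by simp
  have "f n (dQ n 0 (lam_lift n (rho n x))) = dP n 0 (s (Suc n) (lam (Suc n) (rho n x)))"
    using lam_lift_lifts[OF n rc] hom_in_carrier[OF lam_lift_hom rc] by (simp add: F.map_face)
  also have "\<dots> = s n (dD n 0 (lam (Suc n) (rho n x)))"
    using S.map_face lam_moore[OF n rc] D.moore_closed by simp
  also have "\<dots> = s n (rho n x)"
    using lam_face0[OF n rc] rho_id[OF n rho_cycles[OF n xc]] by simp
  finally have cycle_part: "f n (dQ n 0 (lam_lift n (rho n x))) = s n (rho n x)" .
  show ?thesis
  proof (cases n)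
    case 0
    then show ?thesis
      using cycle_part xc lam_lift_moore Q.moore_closed F.map_one hom_in_carrier[OF Q.face_hom]
      by (simp add: psi_def rho_def F.map_mult hom_in_carrier[OF lam_lift_hom] rc)
  next
    case (Suc q)
    have q: "q \<le> m" using n Suc by simp
    have dc: "dD q 0 x \<in> carrier (D q)" using xc Suc D.face_closed by simp
    have lc: "lam (Suc q) (dD q 0 x) \<in> carrier (D n)" using lam_moore[OF q dc] D.moore_closed Suc by simp
    have "f n (psi n x) = s n (rho n x) \<otimes>\<^bsub>P n\<^esub> s n (lam (Suc q) (dD q 0 x))"
      using cycle_part lam_lift_lifts[OF q dc] Suc rc dc Q.face_closed
      by (simp add: psi_def F.map_mult hom_in_carrier[OF lam_lift_hom])
    also have "\<dots> = s n x"
      using S.map_mult[OF rc lc] D.induced_retraction_mult_section[OF lam_hom[OF q]] x Suc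
      by (simp add: rho_def)
    finally show ?thesis .
  qed
qed

sublocale moore_chain_lift D dD sD Q dQ sQ P dP sP s f psi m
  by unfold_locales (auto intro: psi_hom psi_moore D.moore_closed psi_face0 psi_lifts)

lemma skeleton_lift_exists:
  "\<exists>t. simplicial_hom D dD sD Q dQ sQ t \<and> (\<forall>(q, x) \<in> skeleton D dD sD m. f q (t q x) = s q x)"
  using simplicial_hom_ext skeleton_lifts[OF simplicial_hom_ext ext_lifts] by blast

end

theorem mainTheorem8:
  fixes D :: "nat \<Rightarrow> ('a, 'm1) monoid_scheme" and dD sD :: "nat \<Rightarrow> nat \<Rightarrow> 'a \<Rightarrow> 'a"
    and Q :: "nat \<Rightarrow> ('b, 'm2) monoid_scheme" and dQ sQ :: "nat \<Rightarrow> nat \<Rightarrow> 'b \<Rightarrow> 'b"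
    and P :: "nat \<Rightarrow> ('c, 'm3) monoid_scheme" and dP sP :: "nat \<Rightarrow> nat \<Rightarrow> 'c \<Rightarrow> 'c"
    and s :: "nat \<Rightarrow> 'a \<Rightarrow> 'c" and f :: "nat \<Rightarrow> 'b \<Rightarrow> 'c" and m :: nat
  assumes "simplicial_abgroup D dD sD"
    and "simplicial_abgroup Q dQ sQ"
    and "simplicial_abgroup P dP sP"
    and "simplicial_hom D dD sD P dP sP s"
    and "simplicial_hom Q dQ sQ P dP sP f"
    and "free_simplicial D"
    and "m_connected m D dD"
    and "\<forall>q. f q ` carrier (Q q) = carrier (P q)"
  shows "\<exists>t. simplicial_hom D dD sD Q dQ sQ t \<and>
    (\<forall>(q, x) \<in> skeleton D dD sD m. f q (t q x) = s q x)"
proof -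
  interpret lifting_problem D dD sD Q dQ sQ P dP sP s f m
    using assms by (simp add: lifting_problem_def lifting_problem_axioms_def lifting_setup_def
        lifting_setup_axioms_def simplicial_abelian_def)
  show ?thesis by (rule skeleton_lift_exists)
qed

end
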